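(* Let $A$ be a local commutative ring, $E$ a non-zero $A$-module and $R=A\propto E$ the trivial ring extension of $A$ by $E$. Then $R$ is Gaussian if and only if $A$ is Gaussian and $aE=a^2E$ for each $a\in A$.
   Context: All rings are commutative with identity. The trivial ring extension $R=A\propto E$ is the ring with underlying additive group $A\times E$ and multiplication $(a,e)(a',e')=(aa',ae'+a'e)$. For $f\in R[X]$, the content $c(f)$ is the ideal generated by the coefficients of $f$; $R$ is Gaussian if $c(fg)=c(f)c(g)$ for all $f,g\in R[X]$. *)

theory Defs
  imports "HOL-Algebra.Module" "HOL-Algebra.Ideal_Product" "HOL-Algebra.Polynomials"
begin

definition local_ring :: "('a, 'b) ring_scheme \<Rightarrow> bool" where
  "local_ring R \<longleftrightarrow> cring R \<and> (\<exists>!M. maximalideal M R)"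

definition content :: "('a, 'b) ring_scheme \<Rightarrow> 'a list \<Rightarrow> 'a set" where
  "content R f = genideal R (set f)"

definition gaussian :: "('a, 'b) ring_scheme \<Rightarrow> bool" where
  "gaussian R \<longleftrightarrow>
     (\<forall>f \<in> carrier (univ_poly R (carrier R)). \<forall>g \<in> carrier (univ_poly R (carrier R)).
        content R (f \<otimes>\<^bsub>univ_poly R (carrier R)\<^esub> g) = content R f \<cdot>\<^bsub>R\<^esub> content R g)"

definition triv_ext :: "('a, 'c) ring_scheme \<Rightarrow> ('a, 'b) module \<Rightarrow> ('a \<times> 'b) ring" where
  "triv_ext A E = \<lparr> carrier = carrier A \<times> carrier E,
     monoid.mult = (\<lambda>x y. (fst x \<otimes>\<^bsub>A\<^esub> fst y,
                        (fst x \<odot>\<^bsub>E\<^esub> snd y) \<oplus>\<^bsub>E\<^esub> (fst y \<odot>\<^bsub>E\<^esub> snd x))),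
     one = (\<one>\<^bsub>A\<^esub>, \<zero>\<^bsub>E\<^esub>),
     zero = (\<zero>\<^bsub>A\<^esub>, \<zero>\<^bsub>E\<^esub>),
     add = (\<lambda>x y. (fst x \<oplus>\<^bsub>A\<^esub> fst y, snd x \<oplus>\<^bsub>E\<^esub> snd y)) \<rparr>"

definition smult_module :: "('a, 'b) module \<Rightarrow> 'a \<Rightarrow> 'b set" where
  "smult_module E a = (\<lambda>e. a \<odot>\<^bsub>E\<^esub> e) ` carrier E"

end

theory Submission
  imports Defs
begin

text \<open>
  In a local Gaussian ring A any two elements are comparable for the preorder
  "a dominates b", i.e. b^2 and ab lie in (a^2); an element dominated by a has the form
  s a + n with a n = n^2 = 0. If moreover aE = a^2 E, square-zero elements of A
  annihilate E. Given polynomials f, g over A \<propto> E, let a be a dominant first coordinate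
  among the coefficients of f and g, say a = fst (f p). Then every product f_i g_j
  factors as (a, 0) h_i g_j, where h_p = (1, e) is a unit, and a McCoy-type argument
  places the coefficients of g in c(h g); hence all f_i g_j lie in c(f g).
  Conversely, A is a homomorphic image of A \<propto> E, and the Gaussian identity for
  ((a, 0) + (0, e) X)((a, 0) - (0, e) X) yields aE \<subseteq> a^2 E.
\<close>


section \<open>Coefficient sequences and content\<close>

text \<open>Polynomials are handled through their coefficient sequences, which
  avoids the normalisation bookkeeping of the list representation of polynomials.\<close>

definition cauchy_prod :: "('a, 'b) ring_scheme \<Rightarrow> (nat \<Rightarrow> 'a) \<Rightarrow> (nat \<Rightarrow> 'a) \<Rightarrow> nat \<Rightarrow> 'a" where
  "cauchy_prod R f g k = finsum R (\<lambda>i. f i \<otimes>\<^bsub>R\<^esub> g (k - i)) {..k}"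

definition finite_coeffs :: "('a, 'b) ring_scheme \<Rightarrow> (nat \<Rightarrow> 'a) \<Rightarrow> nat \<Rightarrow> bool" where
  "finite_coeffs R f n \<longleftrightarrow> (\<forall>i. f i \<in> carrier R) \<and> (\<forall>i\<ge>n. f i = \<zero>\<^bsub>R\<^esub>)"

definition seq_content :: "('a, 'b) ring_scheme \<Rightarrow> (nat \<Rightarrow> 'a) \<Rightarrow> 'a set" where
  "seq_content R f = genideal R (range f)"

definition gaussian_seq :: "('a, 'b) ring_scheme \<Rightarrow> bool" where
  "gaussian_seq R \<longleftrightarrow> (\<forall>f g n m. finite_coeffs R f n \<longrightarrow> finite_coeffs R g m \<longrightarrow>
      seq_content R (cauchy_prod R f g) = seq_content R f \<cdot>\<^bsub>R\<^esub> seq_content R g)"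

definition linear_coeffs :: "('a, 'b) ring_scheme \<Rightarrow> 'a \<Rightarrow> 'a \<Rightarrow> nat \<Rightarrow> 'a" where
  "linear_coeffs R a b i = (if i = 0 then a else if i = 1 then b else \<zero>\<^bsub>R\<^esub>)"

context cring
begin

lemma cring_idealI:
  assumes "I \<subseteq> carrier R" "\<zero> \<in> I" "\<And>a b. a \<in> I \<Longrightarrow> b \<in> I \<Longrightarrow> a \<oplus> b \<in> I"
    "\<And>a. a \<in> I \<Longrightarrow> \<ominus> a \<in> I" "\<And>a x. a \<in> I \<Longrightarrow> x \<in> carrier R \<Longrightarrow> x \<otimes> a \<in> I"
  shows "ideal I R"
proof (rule idealI[OF ring_axioms])
  show "subgroup I (add_monoid R)"
    by (rule add.subgroupI) (use assms in \<open>auto simp: a_inv_def[symmetric]\<close>)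
  show "\<And>a x. a \<in> I \<Longrightarrow> x \<in> carrier R \<Longrightarrow> x \<otimes> a \<in> I" by fact
  show "\<And>a x. a \<in> I \<Longrightarrow> x \<in> carrier R \<Longrightarrow> a \<otimes> x \<in> I"
    using assms(1,5) m_comm by (metis subsetD)
qed

lemma ideal_zero_mem: "ideal I R \<Longrightarrow> \<zero> \<in> I"
  by (simp add: additive_subgroup.zero_closed ideal.axioms(1))

lemma ideal_add_cancel:
  assumes I: "ideal I R" and x: "x \<in> carrier R" and y: "y \<in> I" and xy: "x \<oplus> y \<in> I"
  shows "x \<in> I"
proof -
  interpret ideal I R by fact
  have "y \<in> carrier R" using y Icarr by blast
  then have "x = (x \<oplus> y) \<oplus> \<ominus> y" using x by (simp add: a_assoc r_neg)
  also have "\<dots> \<in> I" by (rule a_closed[OF xy a_inv_closed[OF y]])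
  finally show ?thesis .
qed

lemma ideal_mult_preimage:
  assumes I: "ideal I R" and c: "c \<in> carrier R"
  shows "ideal {x \<in> carrier R. c \<otimes> x \<in> I} R"
proof (rule cring_idealI)
  interpret ideal I R by fact
  fix a b x
  assume a: "a \<in> {x \<in> carrier R. c \<otimes> x \<in> I}"
  show "a \<oplus> b \<in> {x \<in> carrier R. c \<otimes> x \<in> I}" if "b \<in> {x \<in> carrier R. c \<otimes> x \<in> I}"
    using a that c by (simp add: r_distr a_closed)
  show "\<ominus> a \<in> {x \<in> carrier R. c \<otimes> x \<in> I}"
    using a c by (simp add: r_minus a_inv_closed)
  assume x: "x \<in> carrier R"
  have "c \<otimes> (x \<otimes> a) = x \<otimes> (c \<otimes> a)" using a x c m_lcomm by auto
  then show "x \<otimes> a \<in> {x \<in> carrier R. c \<otimes> x \<in> I}" using a x I_l_closed by auto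
qed (use c ideal_zero_mem[OF I] in auto)

lemma finsum_in_ideal:
  assumes I: "ideal I R" and "finite A" and "\<And>i. i \<in> A \<Longrightarrow> h i \<in> I"
  shows "finsum R h A \<in> I"
  using assms(2,3)
proof (induction A rule: finite_induct)
  case empty
  then show ?case using ideal_zero_mem[OF I] by simp
next
  case (insert x F)
  interpret ideal I R by fact
  have "h \<in> insert x F \<rightarrow> carrier R" using insert.prems Icarr by auto
  then have "finsum R h (insert x F) = h x \<oplus> finsum R h F"
    using insert.hyps by (simp add: finsum_insert)
  then show ?case using insert by (simp add: a_closed)
qed

lemma genideal_prod_subset:
  assumes S: "S \<subseteq> carrier R" and S': "S' \<subseteq> carrier R" and I: "ideal I R"
    and prods: "\<And>x y. x \<in> S \<Longrightarrow> y \<in> S' \<Longrightarrow> x \<otimes> y \<in> I"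
  shows "(Idl S) \<cdot> (Idl S') \<subseteq> I"
proof -
  have left: "i \<otimes> y \<in> I" if i: "i \<in> Idl S" and y: "y \<in> S'" for i y
  proof -
    have yc: "y \<in> carrier R" using y S' by auto
    have "S \<subseteq> {x \<in> carrier R. y \<otimes> x \<in> I}"
      using S prods[OF _ y] m_comm[OF yc] by auto
    then have "Idl S \<subseteq> {x \<in> carrier R. y \<otimes> x \<in> I}"
      by (rule genideal_minimal[OF ideal_mult_preimage[OF I yc]])
    then show ?thesis using i m_comm[OF yc] by auto
  qed
  have both: "i \<otimes> j \<in> I" if i: "i \<in> Idl S" and j: "j \<in> Idl S'" for i j
  proof -
    have ic: "i \<in> carrier R" by (rule ideal.Icarr[OF genideal_ideal[OF S] i])
    have "S' \<subseteq> {x \<in> carrier R. i \<otimes> x \<in> I}" using S' left[OF i] by auto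
    then have "Idl S' \<subseteq> {x \<in> carrier R. i \<otimes> x \<in> I}"
      by (rule genideal_minimal[OF ideal_mult_preimage[OF I ic]])
    then show ?thesis using j by auto
  qed
  show ?thesis
  proof
    fix s assume "s \<in> (Idl S) \<cdot> (Idl S')"
    then show "s \<in> I"
    proof (induction s rule: ideal_prod.induct)
      case (prod i j) then show ?case by (rule both)
    next
      case (sum s1 s2) then show ?case
        using I by (simp add: additive_subgroup.a_closed ideal.axioms(1))
    qed
  qed
qed

lemma cauchy_prod_closed:
  assumes "\<And>i. f i \<in> carrier R" "\<And>i. g i \<in> carrier R"
  shows "cauchy_prod R f g k \<in> carrier R"
  unfolding cauchy_prod_def by (rule finsum_closed) (use assms in auto)

lemma cauchy_prod_comm:
  assumes f: "\<And>i. f i \<in> carrier R" and g: "\<And>i. g i \<in> carrier R"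
  shows "cauchy_prod R f g = cauchy_prod R g f"
proof
  fix k :: nat
  have img: "(\<lambda>i. k - i) ` {..k} = {..k}"
  proof (intro equalityI subsetI)
    fix i assume "i \<in> {..k}"
    then have "i = k - (k - i)" "k - i \<in> {..k}" by auto
    then show "i \<in> (\<lambda>i. k - i) ` {..k}" by blast
  qed auto
  have "cauchy_prod R g f k = finsum R (\<lambda>i. g i \<otimes> f (k - i)) ((\<lambda>i. k - i) ` {..k})"
    unfolding cauchy_prod_def img ..
  also have "\<dots> = finsum R (\<lambda>i. g (k - i) \<otimes> f (k - (k - i))) {..k}"
    by (rule finsum_reindex) (use f g in \<open>auto simp: inj_on_def\<close>)
  also have "\<dots> = cauchy_prod R f g k"
    unfolding cauchy_prod_def by (rule finsum_cong') (use f g m_comm in auto)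
  finally show "cauchy_prod R f g k = cauchy_prod R g f k" ..
qed

lemma seq_content_ideal: "(\<And>i. f i \<in> carrier R) \<Longrightarrow> ideal (seq_content R f) R"
  unfolding seq_content_def by (rule genideal_ideal) auto

lemma seq_content_mem: "(\<And>i. f i \<in> carrier R) \<Longrightarrow> f i \<in> seq_content R f"
  unfolding seq_content_def using genideal_self[of "range f"] by auto

lemma seq_content_minimal:
  "ideal I R \<Longrightarrow> (\<And>i. f i \<in> I) \<Longrightarrow> seq_content R f \<subseteq> I"
  unfolding seq_content_def by (rule genideal_minimal) auto

lemma seq_content_cauchy_prod_subset:
  assumes f: "\<And>i. f i \<in> carrier R" and g: "\<And>i. g i \<in> carrier R"
  shows "seq_content R (cauchy_prod R f g) \<subseteq> seq_content R f \<cdot> seq_content R g"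
proof (rule seq_content_minimal)
  show I: "ideal (seq_content R f \<cdot> seq_content R g) R"
    by (rule ideal_prod_is_ideal[OF seq_content_ideal seq_content_ideal]) (use f g in auto)
  show "cauchy_prod R f g k \<in> seq_content R f \<cdot> seq_content R g" for k
    unfolding cauchy_prod_def
    by (rule finsum_in_ideal[OF I]) (simp_all add: ideal_prod.prod seq_content_mem f g)
qed

lemma seq_content_eqI:
  assumes f: "\<And>i. f i \<in> carrier R" and g: "\<And>i. g i \<in> carrier R"
    and prods: "\<And>i j. f i \<otimes> g j \<in> seq_content R (cauchy_prod R f g)"
  shows "seq_content R (cauchy_prod R f g) = seq_content R f \<cdot> seq_content R g"
proof
  show "seq_content R f \<cdot> seq_content R g \<subseteq> seq_content R (cauchy_prod R f g)"
    unfolding seq_content_def[of R f] seq_content_def[of R g]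
    by (rule genideal_prod_subset) (use f g prods seq_content_ideal cauchy_prod_closed in auto)
qed (rule seq_content_cauchy_prod_subset[OF f g])

lemma gaussian_seqD:
  "gaussian_seq R \<Longrightarrow> finite_coeffs R f n \<Longrightarrow> finite_coeffs R g m \<Longrightarrow>
    seq_content R (cauchy_prod R f g) = seq_content R f \<cdot> seq_content R g"
  unfolding gaussian_seq_def by blast

lemma gaussian_seqI:
  assumes "\<And>f g n m i j. finite_coeffs R f n \<Longrightarrow> finite_coeffs R g m \<Longrightarrow>
      f i \<otimes> g j \<in> seq_content R (cauchy_prod R f g)"
  shows "gaussian_seq R"
  unfolding gaussian_seq_def
proof (intro allI impI)
  fix f g n m assume "finite_coeffs R f n" "finite_coeffs R g m"
  then show "seq_content R (cauchy_prod R f g) = seq_content R f \<cdot> seq_content R g"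
    by (intro seq_content_eqI assms) (auto simp: finite_coeffs_def)
qed

lemma cauchy_prod_top_mem:
  assumes I: "ideal I R" and s: "\<And>i. s i \<in> carrier R" and g: "\<And>i. g i \<in> carrier R"
    and gz: "\<And>i. i > n \<Longrightarrow> g i = \<zero>"
    and above: "\<And>j' i. j' > j \<Longrightarrow> s j' \<otimes> g i \<in> I"
    and prod: "cauchy_prod R s g (j + n) \<in> I"
  shows "s j \<otimes> g n \<in> I"
proof -
  let ?t = "\<lambda>k. s k \<otimes> g (j + n - k)"
  have rest: "finsum R ?t ({..j + n} - {j}) \<in> I"
  proof (rule finsum_in_ideal[OF I])
    fix k assume k: "k \<in> {..j + n} - {j}"
    show "?t k \<in> I"
    proof (cases "k < j")
      case True
      then show ?thesis using gz[of "j + n - k"] s[of k] ideal_zero_mem[OF I] by simp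
    next
      case False
      then show ?thesis using k above by auto
    qed
  qed simp
  have "cauchy_prod R s g (j + n) = finsum R ?t (insert j ({..j + n} - {j}))"
    unfolding cauchy_prod_def by (rule arg_cong[where f = "finsum R ?t"]) auto
  also have "\<dots> = ?t j \<oplus> finsum R ?t ({..j + n} - {j})"
    by (rule finsum_insert) (use s g in auto)
  finally have "?t j \<oplus> finsum R ?t ({..j + n} - {j}) \<in> I" using prod by simp
  then have "?t j \<in> I" by (rule ideal_add_cancel[OF I _ rest, rotated]) (use s g in auto)
  then show ?thesis by simp
qed

lemma cauchy_prod_drop_coeff_mem:
  assumes I: "ideal I R" and s: "\<And>i. s i \<in> carrier R" and g: "\<And>i. g i \<in> carrier R"
    and c: "c \<in> carrier R" and cg: "c \<otimes> g n \<in> I"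
    and prods: "\<And>k. cauchy_prod R s g k \<in> I"
  shows "cauchy_prod R s (\<lambda>i. if i = n then \<zero> else c \<otimes> g i) k \<in> I"
proof -
  interpret ideal I R by fact
  let ?g' = "\<lambda>i. if i = n then \<zero> else c \<otimes> g i"
  let ?h = "\<lambda>i. if k - i = n then s i \<otimes> (c \<otimes> g n) else \<zero>"
  have g'c: "\<And>i. ?g' i \<in> carrier R" using c g by auto
  have hI: "\<And>i. ?h i \<in> I" using I_l_closed[OF cg s] ideal_zero_mem[OF I] by simp
  have hc: "\<And>i. ?h i \<in> carrier R" using hI Icarr by blast
  have "c \<otimes> cauchy_prod R s g k = finsum R (\<lambda>i. c \<otimes> (s i \<otimes> g (k - i))) {..k}"
    unfolding cauchy_prod_def by (rule finsum_rdistr) (use c s g in auto)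
  also have "\<dots> = finsum R (\<lambda>i. s i \<otimes> ?g' (k - i) \<oplus> ?h i) {..k}"
    by (rule finsum_cong') (use c s g g'c hc in \<open>auto simp: m_lcomm\<close>)
  also have "\<dots> = cauchy_prod R s ?g' k \<oplus> finsum R ?h {..k}"
    unfolding cauchy_prod_def by (rule finsum_addf) (use s g'c hc in auto)
  finally have eq: "c \<otimes> cauchy_prod R s g k = cauchy_prod R s ?g' k \<oplus> finsum R ?h {..k}" .
  have "c \<otimes> cauchy_prod R s g k \<in> I" using prods c I_l_closed by blast
  moreover have "finsum R ?h {..k} \<in> I" by (rule finsum_in_ideal[OF I]) (use hI in auto)
  ultimately show ?thesis
    using ideal_add_cancel[OF I cauchy_prod_closed[OF s g'c]] eq by simp
qed

text \<open>A McCoy-type argument: the coefficients of g are peeled off from the top, each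
  step killing the products with the coefficients of s by a descending induction.\<close>

lemma unit_coeff_content_mem:
  assumes I: "ideal I R" and s: "finite_coeffs R s D" and u: "s p \<in> Units R"
    and g: "finite_coeffs R g n" and prods: "\<And>k. cauchy_prod R s g k \<in> I"
  shows "g i \<in> I"
  using g prods
proof (induction n arbitrary: g i)
  case 0
  then show ?case using ideal_zero_mem[OF I] by (simp add: finite_coeffs_def)
next
  case (Suc n)
  have sc: "\<And>i. s i \<in> carrier R" and sz: "\<And>i. i \<ge> D \<Longrightarrow> s i = \<zero>"
    using s by (auto simp: finite_coeffs_def)
  have gc: "\<And>i. g i \<in> carrier R" and gz: "\<And>i. i > n \<Longrightarrow> g i = \<zero>"
    using Suc.prems(1) by (auto simp: finite_coeffs_def)
  have all_prods: "s j \<otimes> g k \<in> I" for j k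
  proof (induction "D - j" arbitrary: j k rule: less_induct)
    case less
    show ?case
    proof (cases "D \<le> j")
      case True
      then show ?thesis using sz gc ideal_zero_mem[OF I] by simp
    next
      case False
      then have above: "s j' \<otimes> g k' \<in> I" if "j' > j" for j' k'
        using less that by simp
      have top: "s j \<otimes> g n \<in> I"
        by (rule cauchy_prod_top_mem[OF I sc gc gz above Suc.prems(2)])
      have "(if k = n then \<zero> else s j \<otimes> g k) \<in> I"
      proof (rule Suc.IH)
        show "finite_coeffs R (\<lambda>i. if i = n then \<zero> else s j \<otimes> g i) n"
          using sc gc gz by (auto simp: finite_coeffs_def)
      qed (rule cauchy_prod_drop_coeff_mem[OF I sc gc sc[of j] top Suc.prems(2)])
      then show ?thesis using top by (cases "k = n") auto
    qed
  qed
  have "inv (s p) \<otimes> (s p \<otimes> g i) \<in> I"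
    by (rule ideal.I_l_closed[OF I all_prods]) (use u in simp)
  also have "inv (s p) \<otimes> (s p \<otimes> g i) = g i"
    using u gc[of i] by (simp add: m_assoc[symmetric] Units_closed)
  finally show ?case .
qed

lemma factorization_prod_mem_content:
  assumes f: "\<And>i. f i \<in> carrier R" and h: "finite_coeffs R h D" and u: "h p \<in> Units R"
    and g: "finite_coeffs R g m" and c: "c \<in> carrier R"
    and factor: "\<And>i j. f i \<otimes> g j = c \<otimes> (h i \<otimes> g j)"
  shows "f i \<otimes> g j \<in> seq_content R (cauchy_prod R f g)"
proof -
  have hc: "\<And>i. h i \<in> carrier R" and gc: "\<And>i. g i \<in> carrier R"
    using h g by (auto simp: finite_coeffs_def)
  let ?I = "seq_content R (cauchy_prod R f g)"
  let ?J = "{x \<in> carrier R. c \<otimes> x \<in> ?I}"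
  have I: "ideal ?I R" by (rule seq_content_ideal[OF cauchy_prod_closed[OF f gc]])
  have J: "ideal ?J R" by (rule ideal_mult_preimage[OF I c])
  have fg: "cauchy_prod R f g k = c \<otimes> cauchy_prod R h g k" for k
  proof -
    have "cauchy_prod R f g k = finsum R (\<lambda>i. c \<otimes> (h i \<otimes> g (k - i))) {..k}"
      unfolding cauchy_prod_def using factor by simp
    also have "\<dots> = c \<otimes> cauchy_prod R h g k"
      unfolding cauchy_prod_def by (rule finsum_rdistr[symmetric]) (use c hc gc in auto)
    finally show ?thesis .
  qed
  have "cauchy_prod R h g k \<in> ?J" for k
    using seq_content_mem[of "cauchy_prod R f g" k, OF cauchy_prod_closed[OF f gc]]
      cauchy_prod_closed[OF hc gc] fg[of k] by auto
  then have "g j \<in> ?J" by (rule unit_coeff_content_mem[OF J h u g])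
  then have "h i \<otimes> g j \<in> ?J" by (rule ideal.I_l_closed[OF J _ hc])
  then show ?thesis using factor by simp
qed

lemma coeff_map_rev_upt:
  assumes "\<And>i. i \<ge> n \<Longrightarrow> f i = \<zero>"
  shows "coeff (map f (rev [0..<n])) = f"
proof
  fix i show "coeff (map f (rev [0..<n])) i = f i"
  proof (cases "i < n")
    case True
    then show ?thesis by (simp add: coeff_nth rev_nth)
  next
    case False
    then show ?thesis using coeff_length[of "map f (rev [0..<n])" i] assms by simp
  qed
qed

lemma content_eq_seq_content:
  assumes "set p \<subseteq> carrier R"
  shows "content R p = seq_content R (coeff p)"
proof -
  have sub: "set p \<subseteq> range (coeff p)" using coeff_img_restrict[of p] by auto
  have rc: "range (coeff p) \<subseteq> carrier R" using assms by auto
  have I: "ideal (Idl (set p)) R" by (rule genideal_ideal[OF assms])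
  have "range (coeff p) \<subseteq> Idl (set p)"
  proof
    fix x assume "x \<in> range (coeff p)"
    then obtain i where x: "x = coeff p i" by auto
    show "x \<in> Idl (set p)"
    proof (cases "i < length p")
      case True
      then have "x \<in> set p" using coeff_img_restrict[of p] x by auto
      then show ?thesis using genideal_self[OF assms] by auto
    next
      case False
      then show ?thesis using x coeff_length[of p i] ideal_zero_mem[OF I] by simp
    qed
  qed
  then have "Idl (range (coeff p)) \<subseteq> Idl (set p)" by (rule genideal_minimal[OF I])
  moreover have "Idl (set p) \<subseteq> Idl (range (coeff p))"
    using sub genideal_self[OF rc] by (intro genideal_minimal[OF genideal_ideal[OF rc]]) auto
  ultimately show ?thesis unfolding content_def seq_content_def by auto
qed

lemma coeff_poly_mult:
  assumes "set p \<subseteq> carrier R" "set q \<subseteq> carrier R"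
  shows "coeff (poly_mult p q) = cauchy_prod R (coeff p) (coeff q)"
  unfolding cauchy_prod_def using poly_mult_coeff[OF assms] by simp

lemma gaussian_seq_if_gaussian:
  assumes G: "gaussian R"
  shows "gaussian_seq R"
  unfolding gaussian_seq_def
proof (intro allI impI)
  fix f g n m assume f: "finite_coeffs R f n" and g: "finite_coeffs R g m"
  define p where "p = normalize (map f (rev [0..<n]))"
  define q where "q = normalize (map g (rev [0..<m]))"
  have sf: "set (map f (rev [0..<n])) \<subseteq> carrier R" and sg: "set (map g (rev [0..<m])) \<subseteq> carrier R"
    using f g by (auto simp: finite_coeffs_def)
  have cp: "coeff p = f" and cq: "coeff q = g"
    using coeff_map_rev_upt[of n f] coeff_map_rev_upt[of m g] f g
    by (simp_all add: p_def q_def finite_coeffs_def normalize_coeff[symmetric])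
  have pq: "p \<in> carrier (univ_poly R (carrier R))" "q \<in> carrier (univ_poly R (carrier R))"
    unfolding p_def q_def
    using normalize_gives_polynomial[OF sf] normalize_gives_polynomial[OF sg] univ_poly_carrier
    by blast+
  have sp: "set p \<subseteq> carrier R" and sq: "set q \<subseteq> carrier R"
    unfolding p_def q_def using normalize_in_carrier sf sg by auto
  have "content R (poly_mult p q) = content R p \<cdot> content R q"
    using G pq unfolding gaussian_def univ_poly_mult by blast
  then show "seq_content R (cauchy_prod R f g) = seq_content R f \<cdot> seq_content R g"
    using content_eq_seq_content[OF poly_mult_in_carrier[OF sp sq]] coeff_poly_mult[OF sp sq]
      content_eq_seq_content[OF sp] content_eq_seq_content[OF sq] cp cq
    by simp
qed

lemma gaussian_if_gaussian_seq:
  assumes G: "gaussian_seq R"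
  shows "gaussian R"
  unfolding gaussian_def
proof (intro ballI)
  fix p q assume "p \<in> carrier (univ_poly R (carrier R))" "q \<in> carrier (univ_poly R (carrier R))"
  then have sp: "set p \<subseteq> carrier R" and sq: "set q \<subseteq> carrier R"
    using univ_poly_carrier polynomial_incl by blast+
  have "finite_coeffs R (coeff p) (length p)" "finite_coeffs R (coeff q) (length q)"
    using sp sq coeff_length by (auto simp: finite_coeffs_def)
  then have "seq_content R (cauchy_prod R (coeff p) (coeff q)) =
      seq_content R (coeff p) \<cdot> seq_content R (coeff q)"
    by (rule gaussian_seqD[OF G])
  then show "content R (p \<otimes>\<^bsub>univ_poly R (carrier R)\<^esub> q) = content R p \<cdot> content R q"
    unfolding univ_poly_mult
    using content_eq_seq_content[OF poly_mult_in_carrier[OF sp sq]] coeff_poly_mult[OF sp sq]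
      content_eq_seq_content[OF sp] content_eq_seq_content[OF sq]
    by simp
qed

lemma gaussian_iff_gaussian_seq: "gaussian R \<longleftrightarrow> gaussian_seq R"
  using gaussian_seq_if_gaussian gaussian_if_gaussian_seq by blast

lemma cauchy_prod_linear_coeffs:
  assumes "a \<in> carrier R" "b \<in> carrier R" "x \<in> carrier R" "y \<in> carrier R"
  shows "cauchy_prod R (linear_coeffs R a b) (linear_coeffs R x y) k =
     (if k = 0 then a \<otimes> x else if k = 1 then a \<otimes> y \<oplus> b \<otimes> x else if k = 2 then b \<otimes> y else \<zero>)"
proof -
  let ?t = "\<lambda>k i. linear_coeffs R a b i \<otimes> linear_coeffs R x y (k - i)"
  have tc: "?t k \<in> A \<rightarrow> carrier R" for k A using assms by (auto simp: linear_coeffs_def)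
  consider "k = 0" | "k = 1" | "k = 2" | "k \<ge> 3" by linarith
  then show ?thesis
  proof cases
    case 1
    then show ?thesis unfolding cauchy_prod_def using assms by (simp add: linear_coeffs_def)
  next
    case 2
    have "finsum R (?t 1) {..Suc 0} = ?t 1 (Suc 0) \<oplus> finsum R (?t 1) {..0}"
      by (rule finsum_Suc) (use tc in auto)
    then show ?thesis
      using 2 assms unfolding cauchy_prod_def by (simp add: linear_coeffs_def a_comm)
  next
    case 3
    have "finsum R (?t 2) {..Suc (Suc 0)} = ?t 2 (Suc (Suc 0)) \<oplus> (?t 2 (Suc 0) \<oplus> finsum R (?t 2) {..0})"
      using tc by (simp add: finsum_Suc)
    then show ?thesis
      using 3 assms unfolding cauchy_prod_def by (simp add: linear_coeffs_def numeral_2_eq_2)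
  next
    case 4
    then have "finsum R (?t k) {..k} = finsum R (\<lambda>i. \<zero>) {..k}"
      by (intro finsum_cong') (use assms in \<open>auto simp: linear_coeffs_def\<close>)
    then show ?thesis using 4 unfolding cauchy_prod_def by simp
  qed
qed

lemma gaussian_seq_linear:
  assumes G: "gaussian_seq R"
    and c: "a \<in> carrier R" "b \<in> carrier R" "x \<in> carrier R" "y \<in> carrier R"
    and J: "ideal J R" and "a \<otimes> x \<in> J" "a \<otimes> y \<oplus> b \<otimes> x \<in> J" "b \<otimes> y \<in> J"
    and u: "u \<in> {a, b}" and v: "v \<in> {x, y}"
  shows "u \<otimes> v \<in> J"
proof -
  let ?f = "linear_coeffs R a b" and ?g = "linear_coeffs R x y"
  have fc: "\<And>i. ?f i \<in> carrier R" and gc: "\<And>i. ?g i \<in> carrier R"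
    using c by (simp_all add: linear_coeffs_def)
  have "finite_coeffs R ?f 2" "finite_coeffs R ?g 2"
    using c by (auto simp: finite_coeffs_def linear_coeffs_def)
  then have eq: "seq_content R (cauchy_prod R ?f ?g) = seq_content R ?f \<cdot> seq_content R ?g"
    by (rule gaussian_seqD[OF G])
  have sub: "seq_content R (cauchy_prod R ?f ?g) \<subseteq> J"
  proof (rule seq_content_minimal[OF J])
    fix k
    show "cauchy_prod R ?f ?g k \<in> J"
      unfolding cauchy_prod_linear_coeffs[OF c]
      using assms(7-9) ideal_zero_mem[OF J] by simp
  qed
  have "u \<in> seq_content R ?f"
    using seq_content_mem[of ?f 0, OF fc] seq_content_mem[of ?f 1, OF fc] u
    by (auto simp: linear_coeffs_def split: if_splits)
  moreover have "v \<in> seq_content R ?g"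
    using seq_content_mem[of ?g 0, OF gc] seq_content_mem[of ?g 1, OF gc] v
    by (auto simp: linear_coeffs_def split: if_splits)
  ultimately show ?thesis using eq sub ideal_prod.prod by fast
qed


end

section \<open>Gaussian local rings\<close>

definition dominates :: "('a, 'b) ring_scheme \<Rightarrow> 'a \<Rightarrow> 'a \<Rightarrow> bool" where
  "dominates R a b \<longleftrightarrow>
     b \<otimes>\<^bsub>R\<^esub> b \<in> PIdl\<^bsub>R\<^esub> (a \<otimes>\<^bsub>R\<^esub> a) \<and> a \<otimes>\<^bsub>R\<^esub> b \<in> PIdl\<^bsub>R\<^esub> (a \<otimes>\<^bsub>R\<^esub> a)"

context cring
begin

lemma cgenideal_memI: "r \<in> carrier R \<Longrightarrow> x = r \<otimes> c \<Longrightarrow> x \<in> PIdl c"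
  unfolding cgenideal_def by auto

lemma cgenideal_memE:
  assumes "x \<in> PIdl c"
  obtains r where "r \<in> carrier R" "x = r \<otimes> c"
  using assms unfolding cgenideal_def by auto

lemma ideal_unit_mult_cancel:
  assumes I: "ideal I R" and u: "u \<in> Units R" and x: "x \<in> carrier R" and ux: "u \<otimes> x \<in> I"
  shows "x \<in> I"
proof -
  have "inv u \<otimes> (u \<otimes> x) \<in> I" by (rule ideal.I_l_closed[OF I ux]) (use u in simp)
  also have "inv u \<otimes> (u \<otimes> x) = x" using u x by (simp add: m_assoc[symmetric] Units_closed)
  finally show ?thesis .
qed

lemma dominates_refl: "a \<in> carrier R \<Longrightarrow> dominates R a a"
  unfolding dominates_def by (auto intro: cgenideal_memI[of \<one>])

lemma dominates_zero: "a \<in> carrier R \<Longrightarrow> dominates R a \<zero>"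
  unfolding dominates_def by (auto intro: cgenideal_memI[of \<zero>])

lemma dominates_decomposed:
  assumes a: "a \<in> carrier R" and s: "s \<in> carrier R" and n: "n \<in> carrier R"
    and an: "a \<otimes> n = \<zero>" and nn: "n \<otimes> n = \<zero>"
  shows "dominates R a (s \<otimes> a \<oplus> n)"
proof -
  have "(s \<otimes> a \<oplus> n) \<otimes> (s \<otimes> a \<oplus> n) = (s \<otimes> s) \<otimes> (a \<otimes> a) \<oplus> (s \<oplus> s) \<otimes> (a \<otimes> n) \<oplus> n \<otimes> n"
    using a s n by algebra
  also have "\<dots> = (s \<otimes> s) \<otimes> (a \<otimes> a)" using an nn a s by simp
  finally have "(s \<otimes> a \<oplus> n) \<otimes> (s \<otimes> a \<oplus> n) \<in> PIdl (a \<otimes> a)"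
    using s by (intro cgenideal_memI) auto
  moreover have "a \<otimes> (s \<otimes> a \<oplus> n) = s \<otimes> (a \<otimes> a)"
    using a s n an by (simp add: r_distr m_lcomm)
  then have "a \<otimes> (s \<otimes> a \<oplus> n) \<in> PIdl (a \<otimes> a)" using s by (intro cgenideal_memI) auto
  ultimately show ?thesis unfolding dominates_def by simp
qed

lemma nonunit_in_maximalideal:
  assumes x: "x \<in> carrier R" and nu: "x \<notin> Units R"
  shows "\<exists>M. maximalideal M R \<and> x \<in> M"
proof -
  define S where "S = {J. ideal J R \<and> x \<in> J \<and> \<one> \<notin> J}"
  have "\<one> \<notin> PIdl x"
  proof
    assume "\<one> \<in> PIdl x"
    then obtain r where "r \<in> carrier R" "\<one> = r \<otimes> x" by (rule cgenideal_memE)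
    then have "x \<otimes> r \<in> Units R" using x m_comm by (metis Units_one_closed)
    then have "x \<in> Units R" using unit_factor x \<open>r \<in> carrier R\<close> by blast
    then show False using nu by simp
  qed
  then have "PIdl x \<in> S" using cgenideal_ideal[OF x] cgenideal_self[OF x] unfolding S_def by auto
  then have "\<exists>M\<in>S. \<forall>J\<in>S. M \<subseteq> J \<longrightarrow> J = M"
  proof (intro subset_Zorn_nonempty)
    fix C assume C: "C \<noteq> {}" "subset.chain S C"
    then have "subset.chain {I. ideal I R} C"
      unfolding pred_on.chain_def S_def by auto
    then have "ideal (\<Union>C) R" using chain_Union_is_ideal[of C] C(1) by simp
    then show "\<Union>C \<in> S" using C unfolding pred_on.chain_def S_def by auto
  qed auto
  then obtain M where M: "M \<in> S" and max: "\<And>J. J \<in> S \<Longrightarrow> M \<subseteq> J \<Longrightarrow> J = M" by blast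
  have "maximalideal M R"
  proof (rule maximalidealI)
    show MI: "ideal M R" and "carrier R \<noteq> M" using M unfolding S_def by auto
    fix J assume J: "ideal J R" "M \<subseteq> J" "J \<subseteq> carrier R"
    show "J = M \<or> J = carrier R"
    proof (cases "\<one> \<in> J")
      case True then show ?thesis using ideal.one_imp_carrier[OF J(1)] by simp
    next
      case False then show ?thesis using M J max unfolding S_def by auto
    qed
  qed
  then show ?thesis using M unfolding S_def by auto
qed

end

locale local_cring = cring +
  assumes unique_maximalideal: "\<exists>!M. maximalideal M R"
begin

lemma unit_or_one_minus_unit:
  assumes x: "x \<in> carrier R"
  shows "x \<in> Units R \<or> \<one> \<ominus> x \<in> Units R"
proof (rule ccontr)
  assume "\<not> ?thesis"
  then obtain M1 M2 where M1: "maximalideal M1 R" "x \<in> M1"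
    and M2: "maximalideal M2 R" "\<one> \<ominus> x \<in> M2"
    using nonunit_in_maximalideal x by (metis minus_closed one_closed)
  then have "x \<oplus> (\<one> \<ominus> x) \<in> M1" using unique_maximalideal
    by (metis additive_subgroup.a_closed ideal.axioms(1) maximalideal.axioms(1))
  moreover have "x \<oplus> (\<one> \<ominus> x) = \<one>" using x by algebra
  ultimately have "M1 = carrier R"
    using ideal.one_imp_carrier M1(1) maximalideal.axioms(1) by metis
  then show False using M1(1) maximalideal.I_notcarr by metis
qed

lemma one_plus_nonunit_unit:
  assumes x: "x \<in> carrier R" and nu: "x \<notin> Units R"
  shows "\<one> \<oplus> x \<in> Units R"
proof -
  have "\<ominus> x \<notin> Units R"
    using nu x unit_factor[of "\<ominus> x" "\<ominus> \<one>"] by (metis Units_minus_one_closed a_inv_closed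
        l_minus m_comm one_closed r_one Units_m_closed minus_minus)
  then have "\<one> \<ominus> \<ominus> x \<in> Units R" using unit_or_one_minus_unit x by blast
  then show ?thesis using x by (simp add: minus_eq)
qed

lemma sum_unit_imp_unit:
  assumes x: "x \<in> carrier R" and y: "y \<in> carrier R" and u: "x \<oplus> y \<in> Units R"
  shows "x \<in> Units R \<or> y \<in> Units R"
proof -
  let ?w = "inv (x \<oplus> y)"
  have w: "?w \<in> carrier R" using u by simp
  have sum: "x \<otimes> ?w \<oplus> y \<otimes> ?w = \<one>" using u x y w by (simp add: l_distr[symmetric])
  have "\<one> \<ominus> x \<otimes> ?w = (x \<otimes> ?w \<oplus> y \<otimes> ?w) \<ominus> x \<otimes> ?w" by (simp only: sum)
  also have "\<dots> = y \<otimes> ?w" using x y w by algebra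
  finally have "x \<otimes> ?w \<in> Units R \<or> y \<otimes> ?w \<in> Units R"
    using unit_or_one_minus_unit[of "x \<otimes> ?w"] x w by simp
  then show ?thesis using unit_factor x y w by blast
qed

lemma nonunit_fixed_zero:
  assumes k: "k \<in> carrier R" "k \<notin> Units R" and y: "y \<in> carrier R" and fix_y: "y = k \<otimes> y"
  shows "y = \<zero>"
proof -
  have u: "\<one> \<ominus> k \<in> Units R" using unit_or_one_minus_unit k by blast
  have "(\<one> \<ominus> k) \<otimes> y = y \<ominus> k \<otimes> y" using k y by algebra
  also have "\<dots> = (\<one> \<ominus> k) \<otimes> \<zero>" using fix_y[symmetric] k y by (simp add: r_neg minus_eq)
  finally show ?thesis using u y by simp
qed

end

locale gaussian_local_ring = local_cring +
  assumes gaussian: "gaussian_seq R"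
begin

lemma sq_zero_if_annihilated:
  assumes a: "a \<in> carrier R" and n: "n \<in> carrier R" and an: "a \<otimes> n = \<zero>"
    and nn: "n \<otimes> n \<in> PIdl (a \<otimes> a)"
  shows "n \<otimes> n = \<zero>"
proof -
  obtain r where r: "r \<in> carrier R" "n \<otimes> n = r \<otimes> (a \<otimes> a)" using nn by (rule cgenideal_memE)
  have "a \<otimes> \<ominus> (r \<otimes> a) \<oplus> n \<otimes> n = \<zero>"
    using a r by (simp only: r(2)) algebra
  moreover have "n \<otimes> \<ominus> (r \<otimes> a) = \<ominus> (r \<otimes> (a \<otimes> n))" using a n r by algebra
  then have "n \<otimes> \<ominus> (r \<otimes> a) = \<zero>" using an r by simp
  ultimately have "n \<otimes> n \<in> {\<zero>}"
    using gaussian_seq_linear[OF gaussian a n n _ zeroideal, of "\<ominus> (r \<otimes> a)"] an r a by simp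
  then show ?thesis by simp
qed

lemma zero_prod_sq_mem:
  assumes a: "a \<in> carrier R" and b: "b \<in> carrier R" and ab: "a \<otimes> b = \<zero>"
  shows "b \<otimes> b \<in> PIdl (a \<otimes> a) \<or> a \<otimes> a \<in> PIdl (b \<otimes> b)"
proof -
  let ?S = "a \<otimes> a \<oplus> b \<otimes> b"
  have Sc: "?S \<in> carrier R" using a b by simp
  have J: "ideal (PIdl ?S) R" by (rule cgenideal_ideal[OF Sc])
  have prods: "a \<otimes> b \<in> PIdl ?S" "a \<otimes> a \<oplus> b \<otimes> b \<in> PIdl ?S" "b \<otimes> a \<in> PIdl ?S"
    using ab m_comm[OF a b] ideal_zero_mem[OF J] cgenideal_self[OF Sc] by auto
  have "a \<otimes> a \<in> PIdl ?S" by (rule gaussian_seq_linear[OF gaussian a b b a J prods]) auto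
  then obtain x where x: "x \<in> carrier R" "a \<otimes> a = x \<otimes> ?S" by (rule cgenideal_memE)
  have "b \<otimes> b \<in> PIdl ?S" by (rule gaussian_seq_linear[OF gaussian a b b a J prods]) auto
  then obtain y where y: "y \<in> carrier R" "b \<otimes> b = y \<otimes> ?S" by (rule cgenideal_memE)
  consider "x \<in> Units R" | "y \<in> Units R" | "x \<oplus> y \<notin> Units R"
    using sum_unit_imp_unit[OF x(1) y(1)] by blast
  then show ?thesis
  proof cases
    case 1
    have I: "ideal (PIdl (a \<otimes> a)) R" using a by (simp add: cgenideal_ideal)
    have "x \<otimes> ?S \<in> PIdl (a \<otimes> a)" using x(2)[symmetric] cgenideal_self a by simp
    then have "?S \<in> PIdl (a \<otimes> a)" by (rule ideal_unit_mult_cancel[OF I 1 Sc])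
    then have "y \<otimes> ?S \<in> PIdl (a \<otimes> a)" by (rule ideal.I_l_closed[OF I _ y(1)])
    then show ?thesis using y(2)[symmetric] by simp
  next
    case 2
    have I: "ideal (PIdl (b \<otimes> b)) R" using b by (simp add: cgenideal_ideal)
    have "y \<otimes> ?S \<in> PIdl (b \<otimes> b)" using y(2)[symmetric] cgenideal_self b by simp
    then have "?S \<in> PIdl (b \<otimes> b)" by (rule ideal_unit_mult_cancel[OF I 2 Sc])
    then have "x \<otimes> ?S \<in> PIdl (b \<otimes> b)" by (rule ideal.I_l_closed[OF I _ x(1)])
    then show ?thesis using x(2)[symmetric] by simp
  next
    case 3
    have "?S = (x \<oplus> y) \<otimes> ?S" using x y Sc by (simp add: l_distr)
    then have "?S = \<zero>" using nonunit_fixed_zero[OF _ 3 Sc] x y by simp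
    then have "b \<otimes> b = \<zero> \<otimes> (a \<otimes> a)" using y a by simp
    then show ?thesis by (auto intro: cgenideal_memI[of \<zero>])
  qed
qed

lemma dominates_decomp:
  assumes a: "a \<in> carrier R" and x: "x \<in> carrier R" and dom: "dominates R a x"
  obtains s n where "s \<in> carrier R" "n \<in> carrier R" "x = s \<otimes> a \<oplus> n"
    "a \<otimes> n = \<zero>" "n \<otimes> n = \<zero>"
proof -
  obtain s where s: "s \<in> carrier R" "a \<otimes> x = s \<otimes> (a \<otimes> a)"
    using dom unfolding dominates_def by (blast elim: cgenideal_memE)
  obtain t where t: "t \<in> carrier R" "x \<otimes> x = t \<otimes> (a \<otimes> a)"
    using dom unfolding dominates_def by (blast elim: cgenideal_memE)
  define n where "n = x \<ominus> s \<otimes> a"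
  have nc: "n \<in> carrier R" using x s a by (simp add: n_def)
  have an: "a \<otimes> n = \<zero>"
  proof -
    have "a \<otimes> n = a \<otimes> x \<ominus> s \<otimes> (a \<otimes> a)" unfolding n_def using a x s(1) by algebra
    then show ?thesis using s a by (simp add: r_neg minus_eq)
  qed
  have "n \<otimes> n = x \<otimes> x \<ominus> s \<otimes> (a \<otimes> x) \<ominus> s \<otimes> (a \<otimes> n)"
    unfolding n_def using a x s(1) by algebra
  also have "\<dots> = (t \<ominus> s \<otimes> s) \<otimes> (a \<otimes> a)"
    unfolding an s(2) t(2) using a s(1) t(1) by algebra
  finally have "n \<otimes> n \<in> PIdl (a \<otimes> a)" using s t by (intro cgenideal_memI) auto
  then have "n \<otimes> n = \<zero>" by (rule sq_zero_if_annihilated[OF a nc an])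
  moreover have "x = s \<otimes> a \<oplus> n" unfolding n_def using a x s(1) by algebra
  ultimately show ?thesis using that s(1) nc an by blast
qed

lemma dominates_or_dominated_decomposed:
  assumes a: "a \<in> carrier R" and w: "w \<in> carrier R" and n: "n \<in> carrier R"
    and an: "a \<otimes> n = \<zero>"
  shows "dominates R a (w \<otimes> a \<oplus> n) \<or> dominates R (w \<otimes> a \<oplus> n) a"
proof -
  let ?b = "w \<otimes> a \<oplus> n"
  have b: "?b \<in> carrier R" using a w n by simp
  have Ia: "ideal (PIdl (a \<otimes> a)) R" and Ib: "ideal (PIdl (?b \<otimes> ?b)) R"
    using a b by (simp_all add: cgenideal_ideal)
  have dom_if: "dominates R a ?b" if "n \<otimes> n \<in> PIdl (a \<otimes> a)"
    by (rule dominates_decomposed[OF a w n an sq_zero_if_annihilated[OF a n an that]])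
  from zero_prod_sq_mem[OF a n an] show ?thesis
  proof
    assume "a \<otimes> a \<in> PIdl (n \<otimes> n)"
    then obtain z where z: "z \<in> carrier R" "a \<otimes> a = z \<otimes> (n \<otimes> n)" by (rule cgenideal_memE)
    show ?thesis
    proof (cases "z \<in> Units R")
      case True
      have "z \<otimes> (n \<otimes> n) \<in> PIdl (a \<otimes> a)" using z(2)[symmetric] cgenideal_self a by simp
      then have "n \<otimes> n \<in> PIdl (a \<otimes> a)" by (rule ideal_unit_mult_cancel[OF Ia True, rotated]) (use n in simp)
      then show ?thesis using dom_if by simp
    next
      case False
      let ?t = "\<one> \<oplus> (w \<otimes> w) \<otimes> z"
      have "(w \<otimes> w) \<otimes> z \<notin> Units R"
        using False unit_factor[of z "w \<otimes> w"] m_comm[of z "w \<otimes> w"] w z(1) by auto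
      then have t: "?t \<in> Units R" using one_plus_nonunit_unit w z by simp
      have "?b \<otimes> ?b = n \<otimes> n \<oplus> (w \<otimes> w) \<otimes> (a \<otimes> a) \<oplus> ((\<one> \<oplus> \<one>) \<otimes> w) \<otimes> (a \<otimes> n)"
        using a w n by algebra
      also have "\<dots> = ?t \<otimes> (n \<otimes> n)"
        unfolding an z(2) using w z(1) n by algebra
      finally have "?t \<otimes> (n \<otimes> n) \<in> PIdl (?b \<otimes> ?b)" using cgenideal_self[OF m_closed[OF b b]] by simp
      then have "n \<otimes> n \<in> PIdl (?b \<otimes> ?b)" by (rule ideal_unit_mult_cancel[OF Ib t, rotated]) (use n in simp)
      then have aa: "a \<otimes> a \<in> PIdl (?b \<otimes> ?b)" using z ideal.I_l_closed[OF Ib] by simp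
      have "?b \<otimes> a = w \<otimes> (a \<otimes> a)" using a w n an by algebra
      then have "?b \<otimes> a \<in> PIdl (?b \<otimes> ?b)" using ideal.I_l_closed[OF Ib aa w] by simp
      with aa show ?thesis unfolding dominates_def by simp
    qed
  qed (rule dom_if[THEN disjI1])
qed

lemma dominates_or_dominated_if_mem:
  assumes a: "a \<in> carrier R" and b: "b \<in> carrier R" and ab: "a \<otimes> b \<in> PIdl (a \<otimes> a)"
  shows "dominates R a b \<or> dominates R b a"
proof -
  obtain w where w: "w \<in> carrier R" "a \<otimes> b = w \<otimes> (a \<otimes> a)" using ab by (rule cgenideal_memE)
  define n where "n = b \<ominus> w \<otimes> a"
  have n: "n \<in> carrier R" using a b w by (simp add: n_def)
  have "a \<otimes> n = a \<otimes> b \<ominus> w \<otimes> (a \<otimes> a)" unfolding n_def using a b w(1) by algebra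
  then have "a \<otimes> n = \<zero>" using w a by (simp add: r_neg minus_eq)
  moreover have "b = w \<otimes> a \<oplus> n" unfolding n_def using a b w(1) by algebra
  ultimately show ?thesis using dominates_or_dominated_decomposed[OF a w(1) n] by simp
qed

lemma mult_mem_sq_sum:
  assumes a: "a \<in> carrier R" and b: "b \<in> carrier R"
  obtains r s where "r \<in> carrier R" "s \<in> carrier R" "a \<otimes> b = r \<otimes> (a \<otimes> a) \<oplus> s \<otimes> (b \<otimes> b)"
proof -
  let ?J = "PIdl (a \<otimes> a) <+>\<^bsub>R\<^esub> PIdl (b \<otimes> b)"
  have J: "ideal ?J R" by (intro add_ideals cgenideal_ideal) (use a b in simp_all)
  have J_memI: "r \<otimes> (a \<otimes> a) \<oplus> s \<otimes> (b \<otimes> b) \<in> ?J" if "r \<in> carrier R" "s \<in> carrier R" for r s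
  proof -
    have "r \<otimes> (a \<otimes> a) \<in> PIdl (a \<otimes> a)" "s \<otimes> (b \<otimes> b) \<in> PIdl (b \<otimes> b)"
      using that by (simp_all add: cgenideal_memI)
    then show ?thesis unfolding set_add_def' by blast
  qed
  have "a \<otimes> a = \<one> \<otimes> (a \<otimes> a) \<oplus> \<zero> \<otimes> (b \<otimes> b)"
    and "a \<otimes> \<ominus> b \<oplus> b \<otimes> a = \<zero> \<otimes> (a \<otimes> a) \<oplus> \<zero> \<otimes> (b \<otimes> b)"
    and "b \<otimes> \<ominus> b = \<zero> \<otimes> (a \<otimes> a) \<oplus> \<ominus> \<one> \<otimes> (b \<otimes> b)"
    using a b by algebra+
  then have "a \<otimes> a \<in> ?J" "a \<otimes> \<ominus> b \<oplus> b \<otimes> a \<in> ?J" "b \<otimes> \<ominus> b \<in> ?J"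
    using J_memI[of \<one> \<zero>] J_memI[of \<zero> \<zero>] J_memI[of \<zero> "\<ominus> \<one>"] by simp_all
  then have "b \<otimes> a \<in> ?J"
    using gaussian_seq_linear[OF gaussian a b a _ J, of "\<ominus> b"] a b by simp
  then obtain h k where "h \<in> PIdl (a \<otimes> a)" "k \<in> PIdl (b \<otimes> b)" "a \<otimes> b = h \<oplus> k"
    unfolding set_add_def' m_comm[OF a b] by blast
  then show ?thesis using that by (blast elim: cgenideal_memE)
qed

lemma mult_sq_sum_parts:
  assumes a: "a \<in> carrier R" and b: "b \<in> carrier R"
  obtains r s U V where "r \<in> carrier R" "s \<in> carrier R" "U \<in> carrier R" "V \<in> carrier R"
    "a \<otimes> (r \<otimes> a) \<oplus> b \<otimes> (s \<otimes> b) = a \<otimes> b"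
    "a \<otimes> (r \<otimes> a) = U \<otimes> (a \<otimes> b)" "b \<otimes> (s \<otimes> b) = V \<otimes> (a \<otimes> b)"
proof -
  obtain r s where rs: "r \<in> carrier R" "s \<in> carrier R"
    and ab: "a \<otimes> b = r \<otimes> (a \<otimes> a) \<oplus> s \<otimes> (b \<otimes> b)"
    by (rule mult_mem_sq_sum[OF a b])
  have abc: "a \<otimes> b \<in> carrier R" using a b by simp
  have sum: "a \<otimes> (r \<otimes> a) \<oplus> b \<otimes> (s \<otimes> b) = a \<otimes> b"
    unfolding ab using a b rs by algebra
  have "a \<otimes> (s \<otimes> b) = s \<otimes> (a \<otimes> b)" "b \<otimes> (r \<otimes> a) = r \<otimes> (a \<otimes> b)"
    using a b rs by algebra+
  then have "a \<otimes> (s \<otimes> b) \<in> PIdl (a \<otimes> b)" "b \<otimes> (r \<otimes> a) \<in> PIdl (a \<otimes> b)"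
    using cgenideal_memI rs by blast+
  moreover have "a \<otimes> (r \<otimes> a) \<oplus> b \<otimes> (s \<otimes> b) \<in> PIdl (a \<otimes> b)"
    unfolding sum by (rule cgenideal_self[OF abc])
  ultimately have "a \<otimes> (r \<otimes> a) \<in> PIdl (a \<otimes> b)" "b \<otimes> (s \<otimes> b) \<in> PIdl (a \<otimes> b)"
    using gaussian_seq_linear[OF gaussian a b _ _ cgenideal_ideal[OF abc], of "s \<otimes> b" "r \<otimes> a"]
      a b rs by auto
  then show ?thesis using that rs sum by (auto elim!: cgenideal_memE)
qed

lemma dominates_total:
  assumes a: "a \<in> carrier R" and b: "b \<in> carrier R"
  shows "dominates R a b \<or> dominates R b a"
proof -
  obtain r s U V where rs: "r \<in> carrier R" "s \<in> carrier R" and UV: "U \<in> carrier R" "V \<in> carrier R"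
    and sum: "a \<otimes> (r \<otimes> a) \<oplus> b \<otimes> (s \<otimes> b) = a \<otimes> b"
    and U: "a \<otimes> (r \<otimes> a) = U \<otimes> (a \<otimes> b)" and V: "b \<otimes> (s \<otimes> b) = V \<otimes> (a \<otimes> b)"
    by (rule mult_sq_sum_parts[OF a b])
  have abc: "a \<otimes> b \<in> carrier R" using a b by simp
  have Ia: "ideal (PIdl (a \<otimes> a)) R" and Ib: "ideal (PIdl (b \<otimes> b)) R"
    using a b by (simp_all add: cgenideal_ideal)
  consider "U \<in> Units R" | "V \<in> Units R" | "U \<oplus> V \<notin> Units R"
    using sum_unit_imp_unit[OF UV] by blast
  then have "a \<otimes> b \<in> PIdl (a \<otimes> a) \<or> b \<otimes> a \<in> PIdl (b \<otimes> b)"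
  proof cases
    case 1
    have "U \<otimes> (a \<otimes> b) = r \<otimes> (a \<otimes> a)" using U m_lcomm[OF a rs(1) a] by simp
    then have "U \<otimes> (a \<otimes> b) \<in> PIdl (a \<otimes> a)" by (rule cgenideal_memI[OF rs(1)])
    then show ?thesis using ideal_unit_mult_cancel[OF Ia 1 abc] by simp
  next
    case 2
    have "V \<otimes> (a \<otimes> b) = s \<otimes> (b \<otimes> b)" using V m_lcomm[OF b rs(2) b] by simp
    then have "V \<otimes> (a \<otimes> b) \<in> PIdl (b \<otimes> b)" by (rule cgenideal_memI[OF rs(2)])
    then show ?thesis using ideal_unit_mult_cancel[OF Ib 2 abc] m_comm[OF a b] by simp
  next
    case 3
    have "a \<otimes> b = (U \<oplus> V) \<otimes> (a \<otimes> b)"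
      using sum[symmetric] U V UV abc by (simp add: l_distr)
    then have "a \<otimes> b = \<zero>" using nonunit_fixed_zero[OF _ 3 abc] UV by simp
    then show ?thesis using a by (auto intro: cgenideal_memI[of \<zero>])
  qed
  then show ?thesis
    using dominates_or_dominated_if_mem[OF a b] dominates_or_dominated_if_mem[OF b a] by blast
qed

lemma dominates_if_sq_mem:
  assumes a: "a \<in> carrier R" and y: "y \<in> carrier R" and yy: "y \<otimes> y \<in> PIdl (a \<otimes> a)"
  shows "dominates R a y"
  using dominates_total[OF a y]
proof
  assume "dominates R y a"
  then obtain e where e: "e \<in> carrier R" "y \<otimes> a = e \<otimes> (y \<otimes> y)"
    unfolding dominates_def by (blast elim: cgenideal_memE)
  have "e \<otimes> (y \<otimes> y) \<in> PIdl (a \<otimes> a)" by (rule ideal.I_l_closed[OF cgenideal_ideal yy e(1)]) (use a in simp)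
  then show ?thesis using yy e(2) m_comm[OF a y] unfolding dominates_def by simp
qed

lemma dominates_trans:
  assumes a: "a \<in> carrier R" and x: "x \<in> carrier R" and y: "y \<in> carrier R"
    and ax: "dominates R a x" and xy: "dominates R x y"
  shows "dominates R a y"
proof (rule dominates_if_sq_mem[OF a y])
  obtain g where "g \<in> carrier R" "y \<otimes> y = g \<otimes> (x \<otimes> x)"
    using xy unfolding dominates_def by (blast elim: cgenideal_memE)
  then show "y \<otimes> y \<in> PIdl (a \<otimes> a)"
    using ideal.I_l_closed[OF cgenideal_ideal] ax a unfolding dominates_def by simp
qed

lemma sq_zero_mult:
  assumes n: "n \<in> carrier R" and m: "m \<in> carrier R" and nn: "n \<otimes> n = \<zero>" and mm: "m \<otimes> m = \<zero>"
  shows "n \<otimes> m = \<zero>"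
  using dominates_total[OF n m] nn mm m_comm[OF n m]
  unfolding dominates_def by (auto simp: cgenideal_def)

lemma exists_dominating_coeff:
  assumes f: "finite_coeffs R f n"
  shows "\<exists>p. \<forall>i. dominates R (f p) (f i)"
proof -
  have fc: "\<And>i. f i \<in> carrier R" using f by (simp add: finite_coeffs_def)
  have "\<exists>p. \<forall>i<k. dominates R (f p) (f i)" for k
  proof (induction k)
    case (Suc k)
    then obtain p where p: "\<forall>i<k. dominates R (f p) (f i)" by blast
    from dominates_total[OF fc fc, of p k] show ?case
    proof
      assume "dominates R (f p) (f k)"
      then show ?case using p less_Suc_eq by auto
    next
      assume "dominates R (f k) (f p)"
      then show ?case
        using p dominates_trans[OF fc fc fc] dominates_refl[OF fc] less_Suc_eq by metis
    qed
  qed simp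
  then obtain p where "\<forall>i<n. dominates R (f p) (f i)" by blast
  then show ?thesis using f dominates_zero[OF fc] by (metis finite_coeffs_def not_less)
qed

end

section \<open>Trivial ring extensions\<close>

context ring_hom_cring
begin

lemma finite_coeffs_hom: "finite_coeffs R f n \<Longrightarrow> finite_coeffs S (\<lambda>i. h (f i)) n"
  by (simp add: finite_coeffs_def)

lemma hom_cauchy_prod:
  assumes "\<And>i. f i \<in> carrier R" "\<And>i. g i \<in> carrier R"
  shows "h (cauchy_prod R f g k) = cauchy_prod S (\<lambda>i. h (f i)) (\<lambda>i. h (g i)) k"
  unfolding cauchy_prod_def using assms by (simp add: Pi_def comp_def)

lemma gaussian_seq_image:
  assumes G: "gaussian_seq R" and surj: "h ` carrier R = carrier S"
  shows "gaussian_seq S"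
proof (rule S.gaussian_seqI)
  fix f g n m i j assume f: "finite_coeffs S f n" and g: "finite_coeffs S g m"
  define lift where "lift y = (if y = \<zero>\<^bsub>S\<^esub> then \<zero> else inv_into (carrier R) h y)" for y
  have lift: "lift y \<in> carrier R" "h (lift y) = y" if "y \<in> carrier S" for y
    using that surj by (auto simp: lift_def inv_into_into f_inv_into_f)
  have fc: "\<And>i. f i \<in> carrier S" and gc: "\<And>i. g i \<in> carrier S"
    using f g by (auto simp: finite_coeffs_def)
  have F: "finite_coeffs R (\<lambda>i. lift (f i)) n" and G': "finite_coeffs R (\<lambda>i. lift (g i)) m"
    using f g lift by (auto simp: finite_coeffs_def lift_def)
  let ?FG = "cauchy_prod R (\<lambda>i. lift (f i)) (\<lambda>i. lift (g i))"
  let ?J = "{x \<in> carrier R. h x \<in> seq_content S (cauchy_prod S f g)}"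
  have J: "ideal ?J R"
    by (rule ring.ideal_vimage[OF S.seq_content_ideal[OF S.cauchy_prod_closed[OF fc gc]]])
  have "h (?FG k) = cauchy_prod S f g k" for k
    using hom_cauchy_prod[of "\<lambda>i. lift (f i)" "\<lambda>i. lift (g i)" k] lift fc gc by simp
  then have "seq_content R ?FG \<subseteq> ?J"
    using S.seq_content_mem[OF S.cauchy_prod_closed[OF fc gc]] R.cauchy_prod_closed lift fc gc
    by (intro R.seq_content_minimal[OF J]) auto
  moreover have "lift (f i) \<otimes> lift (g j) \<in> seq_content R ?FG"
    unfolding R.gaussian_seqD[OF G F G']
    by (rule ideal_prod.prod; rule R.seq_content_mem) (use lift fc gc in auto)
  ultimately show "f i \<otimes>\<^bsub>S\<^esub> g j \<in> seq_content S (cauchy_prod S f g)"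
    using lift fc gc by auto
qed

end

locale trivial_extension = module R M
  for R :: "('a, 'c) ring_scheme" (structure) and M :: "('a, 'b) module"
begin

abbreviation T where "T \<equiv> triv_ext R M"

lemma triv_ext_carrier: "carrier T = carrier R \<times> carrier M"
  and triv_ext_mult: "(a, e) \<otimes>\<^bsub>T\<^esub> (b, d) = (a \<otimes> b, a \<odot>\<^bsub>M\<^esub> d \<oplus>\<^bsub>M\<^esub> b \<odot>\<^bsub>M\<^esub> e)"
  and triv_ext_add: "(a, e) \<oplus>\<^bsub>T\<^esub> (b, d) = (a \<oplus> b, e \<oplus>\<^bsub>M\<^esub> d)"
  and triv_ext_one: "\<one>\<^bsub>T\<^esub> = (\<one>, \<zero>\<^bsub>M\<^esub>)"
  and triv_ext_zero: "\<zero>\<^bsub>T\<^esub> = (\<zero>, \<zero>\<^bsub>M\<^esub>)"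
  by (simp_all add: triv_ext_def)

lemmas triv_ext_simps = triv_ext_carrier triv_ext_mult triv_ext_add triv_ext_one triv_ext_zero

lemma triv_ext_cring: "cring T"
proof (rule cringI)
  show "abelian_group T"
  proof (rule abelian_groupI)
    fix x assume "x \<in> carrier T"
    then show "\<exists>y\<in>carrier T. y \<oplus>\<^bsub>T\<^esub> x = \<zero>\<^bsub>T\<^esub>"
      by (auto simp: triv_ext_simps R.l_neg M.l_neg intro!: bexI[of _ "(\<ominus> fst x, \<ominus>\<^bsub>M\<^esub> snd x)"])
  qed (auto simp: triv_ext_simps R.a_ac M.a_ac)
  show "comm_monoid T"
    by (rule comm_monoidI)
      (auto simp: triv_ext_simps R.m_assoc smult_r_distr smult_assoc1[symmetric] M.a_ac
        R.m_comm R.m_lcomm)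
  fix x y z assume "x \<in> carrier T" "y \<in> carrier T" "z \<in> carrier T"
  then show "(x \<oplus>\<^bsub>T\<^esub> y) \<otimes>\<^bsub>T\<^esub> z = x \<otimes>\<^bsub>T\<^esub> z \<oplus>\<^bsub>T\<^esub> y \<otimes>\<^bsub>T\<^esub> z"
    by (auto simp: triv_ext_simps R.l_distr smult_l_distr smult_r_distr M.a_ac)
qed

end

sublocale trivial_extension \<subseteq> T: cring "triv_ext R M"
  by (rule triv_ext_cring)

context trivial_extension
begin

lemma fst_ring_hom: "ring_hom_cring T R fst"
  by (rule ring_hom_cringI[OF T.is_cring is_cring], rule ring_hom_memI)
    (auto simp: triv_ext_simps)

lemma gaussian_seq_base:
  assumes "gaussian_seq T"
  shows "gaussian_seq R"
proof (rule ring_hom_cring.gaussian_seq_image[OF fst_ring_hom assms])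
  show "fst ` carrier T = carrier R"
    using M.zero_closed by (auto simp: triv_ext_carrier fst_image_times)
qed

lemma smult_module_sq_if_gaussian:
  assumes GT: "gaussian_seq T" and a: "a \<in> carrier R"
  shows "smult_module M a = smult_module M (a \<otimes> a)"
proof
  show "smult_module M (a \<otimes> a) \<subseteq> smult_module M a"
    unfolding smult_module_def using a by (auto simp: smult_assoc1)
  show "smult_module M a \<subseteq> smult_module M (a \<otimes> a)"
  proof
    fix x assume "x \<in> smult_module M a"
    then obtain e where e: "e \<in> carrier M" "x = a \<odot>\<^bsub>M\<^esub> e" unfolding smult_module_def by auto
    let ?J = "PIdl\<^bsub>T\<^esub> (a \<otimes> a, \<zero>\<^bsub>M\<^esub>)"
    have c: "(a, \<zero>\<^bsub>M\<^esub>) \<in> carrier T" "(\<zero>, e) \<in> carrier T" "(\<zero>, \<ominus>\<^bsub>M\<^esub> e) \<in> carrier T"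
      and aa: "(a \<otimes> a, \<zero>\<^bsub>M\<^esub>) \<in> carrier T"
      using a e by (simp_all add: triv_ext_carrier)
    have J: "ideal ?J T" by (rule T.cgenideal_ideal[OF aa])
    have j1: "(a, \<zero>\<^bsub>M\<^esub>) \<otimes>\<^bsub>T\<^esub> (a, \<zero>\<^bsub>M\<^esub>) \<in> ?J"
      using T.cgenideal_self[OF aa] a by (simp add: triv_ext_mult)
    have "(a, \<zero>\<^bsub>M\<^esub>) \<otimes>\<^bsub>T\<^esub> (\<zero>, \<ominus>\<^bsub>M\<^esub> e) \<oplus>\<^bsub>T\<^esub> (\<zero>, e) \<otimes>\<^bsub>T\<^esub> (a, \<zero>\<^bsub>M\<^esub>) = \<zero>\<^bsub>T\<^esub>"
      and "(\<zero>, e) \<otimes>\<^bsub>T\<^esub> (\<zero>, \<ominus>\<^bsub>M\<^esub> e) = \<zero>\<^bsub>T\<^esub>"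
      using a e by (simp_all add: triv_ext_simps smult_r_minus M.l_neg)
    then have j2: "(a, \<zero>\<^bsub>M\<^esub>) \<otimes>\<^bsub>T\<^esub> (\<zero>, \<ominus>\<^bsub>M\<^esub> e) \<oplus>\<^bsub>T\<^esub> (\<zero>, e) \<otimes>\<^bsub>T\<^esub> (a, \<zero>\<^bsub>M\<^esub>) \<in> ?J"
      and j3: "(\<zero>, e) \<otimes>\<^bsub>T\<^esub> (\<zero>, \<ominus>\<^bsub>M\<^esub> e) \<in> ?J"
      using T.ideal_zero_mem[OF J] by simp_all
    have "(\<zero>, e) \<otimes>\<^bsub>T\<^esub> (a, \<zero>\<^bsub>M\<^esub>) \<in> ?J"
      by (rule T.gaussian_seq_linear[OF GT c(1,2,1,3) J j1 j2 j3]) blast+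
    moreover have "(\<zero>, e) \<otimes>\<^bsub>T\<^esub> (a, \<zero>\<^bsub>M\<^esub>) = (\<zero>, x)" using a e by (simp add: triv_ext_mult)
    ultimately have "(\<zero>, x) \<in> ?J" by simp
    then obtain y where y: "y \<in> carrier T" "(\<zero>, x) = y \<otimes>\<^bsub>T\<^esub> (a \<otimes> a, \<zero>\<^bsub>M\<^esub>)"
      by (rule T.cgenideal_memE)
    then obtain r z where "y = (r, z)" "r \<in> carrier R" "z \<in> carrier M"
      by (auto simp: triv_ext_carrier)
    then have "x = (a \<otimes> a) \<odot>\<^bsub>M\<^esub> z" "z \<in> carrier M" using y(2) a by (simp_all add: triv_ext_mult)
    then show "x \<in> smult_module M (a \<otimes> a)" unfolding smult_module_def by auto
  qed
qed

end

locale gaussian_trivial_extension = trivial_extension R M + gaussian_local_ring R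
  for R :: "('a, 'c) ring_scheme" (structure) and M :: "('a, 'b) module" +
  assumes smult_module_sq: "\<And>a. a \<in> carrier R \<Longrightarrow> smult_module M a = smult_module M (a \<otimes> a)"
begin

lemma sq_zero_smult:
  assumes n: "n \<in> carrier R" and nn: "n \<otimes> n = \<zero>" and e: "e \<in> carrier M"
  shows "n \<odot>\<^bsub>M\<^esub> e = \<zero>\<^bsub>M\<^esub>"
proof -
  have "n \<odot>\<^bsub>M\<^esub> e \<in> smult_module M (n \<otimes> n)"
    using smult_module_sq[OF n] e unfolding smult_module_def by auto
  then show ?thesis using nn unfolding smult_module_def by auto
qed

lemma smult_sq_witness:
  assumes a: "a \<in> carrier R" and e: "e \<in> carrier M"
  obtains z where "z \<in> carrier M" "a \<odot>\<^bsub>M\<^esub> e = (a \<otimes> a) \<odot>\<^bsub>M\<^esub> z"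
  using smult_module_sq[OF a] e unfolding smult_module_def by blast

lemma triv_ext_mult_factor:
  assumes a: "a \<in> carrier R" and s: "s \<in> carrier R" and n: "n \<in> carrier R"
    and an: "a \<otimes> n = \<zero>" and nn: "n \<otimes> n = \<zero>"
    and e: "e \<in> carrier M" and e': "e' \<in> carrier M" and ae: "a \<odot>\<^bsub>M\<^esub> e = (a \<otimes> a) \<odot>\<^bsub>M\<^esub> e'"
    and b: "b \<in> carrier R" and ab: "dominates R a b" and d: "d \<in> carrier M"
  shows "(s \<otimes> a \<oplus> n, e) \<otimes>\<^bsub>T\<^esub> (b, d) = (a, \<zero>\<^bsub>M\<^esub>) \<otimes>\<^bsub>T\<^esub> ((s, e') \<otimes>\<^bsub>T\<^esub> (b, d))"
proof -
  obtain c m where c: "c \<in> carrier R" and m: "m \<in> carrier R" and b_eq: "b = c \<otimes> a \<oplus> m"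
    and mm: "m \<otimes> m = \<zero>"
    using dominates_decomp[OF a b ab] by blast
  have nb: "n \<otimes> b = \<zero>"
  proof -
    have "n \<otimes> b = c \<otimes> (a \<otimes> n) \<oplus> n \<otimes> m" unfolding b_eq using a c m n by algebra
    then show ?thesis using an sq_zero_mult[OF n m nn mm] c by simp
  qed
  have b_smult: "b \<odot>\<^bsub>M\<^esub> x = c \<odot>\<^bsub>M\<^esub> (a \<odot>\<^bsub>M\<^esub> x)" if x: "x \<in> carrier M" for x
    unfolding b_eq using a c m x sq_zero_smult[OF m mm x] by (simp add: smult_l_distr smult_assoc1)
  have "(s \<otimes> a \<oplus> n) \<otimes> b = a \<otimes> (s \<otimes> b)"
    using a s n b nb by (simp add: l_distr m_assoc m_lcomm)
  moreover have "(s \<otimes> a \<oplus> n) \<odot>\<^bsub>M\<^esub> d = a \<odot>\<^bsub>M\<^esub> (s \<odot>\<^bsub>M\<^esub> d)"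
    using a s n d sq_zero_smult[OF n nn d] by (simp add: smult_l_distr smult_assoc1 m_comm)
  moreover have "b \<odot>\<^bsub>M\<^esub> e = a \<odot>\<^bsub>M\<^esub> (b \<odot>\<^bsub>M\<^esub> e')"
    using b_smult[OF e] b_smult[OF e'] ae a c e' by (simp add: smult_assoc1[symmetric] m_lcomm)
  ultimately show ?thesis
    using a s b d e' by (simp add: triv_ext_mult smult_r_distr)
qed

lemma triv_ext_coeff_decomp:
  assumes f: "finite_coeffs T f n" and dom: "dominates R (fst (f p)) (fst (f i))"
  obtains s n' e' where "s \<in> carrier R" "n' \<in> carrier R" "e' \<in> carrier M"
    "fst (f i) = s \<otimes> fst (f p) \<oplus> n'" "fst (f p) \<otimes> n' = \<zero>" "n' \<otimes> n' = \<zero>"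
    "fst (f p) \<odot>\<^bsub>M\<^esub> snd (f i) = (fst (f p) \<otimes> fst (f p)) \<odot>\<^bsub>M\<^esub> e'"
    "i = p \<Longrightarrow> s = \<one>" "n \<le> i \<Longrightarrow> i \<noteq> p \<Longrightarrow> s = \<zero> \<and> e' = \<zero>\<^bsub>M\<^esub>"
proof -
  let ?a = "fst (f p)"
  have fc: "\<And>i. fst (f i) \<in> carrier R" "\<And>i. snd (f i) \<in> carrier M"
    and fz: "\<And>i. i \<ge> n \<Longrightarrow> f i = \<zero>\<^bsub>T\<^esub>"
    using f by (auto simp: finite_coeffs_def triv_ext_carrier mem_Times_iff)
  obtain e' where e': "e' \<in> carrier M" "?a \<odot>\<^bsub>M\<^esub> snd (f i) = (?a \<otimes> ?a) \<odot>\<^bsub>M\<^esub> e'"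
    using smult_sq_witness[OF fc] .
  consider "i = p" | "i \<noteq> p" "n \<le> i" | "i \<noteq> p" "\<not> n \<le> i" by blast
  then show ?thesis
  proof cases
    case 1
    then show ?thesis using that[of \<one> \<zero> e'] e' fc by simp
  next
    case 2
    then have "f i = (\<zero>, \<zero>\<^bsub>M\<^esub>)" using fz by (simp add: triv_ext_zero)
    then show ?thesis using that[of \<zero> \<zero> "\<zero>\<^bsub>M\<^esub>"] 2 fc by simp
  next
    case 3
    obtain s n' where "s \<in> carrier R" "n' \<in> carrier R" "fst (f i) = s \<otimes> ?a \<oplus> n'"
      "?a \<otimes> n' = \<zero>" "n' \<otimes> n' = \<zero>"
      using dominates_decomp[OF fc(1) fc(1) dom] .
    then show ?thesis using that[of s n' e'] 3 e' by simp
  qed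
qed

lemma triv_ext_factorization:
  assumes f: "finite_coeffs T f n" and dom: "\<And>i. dominates R (fst (f p)) (fst (f i))"
  obtains h where "finite_coeffs T h (Suc (n + p))" "h p \<in> Units T"
    "\<And>i x. x \<in> carrier T \<Longrightarrow> dominates R (fst (f p)) (fst x) \<Longrightarrow>
       f i \<otimes>\<^bsub>T\<^esub> x = (fst (f p), \<zero>\<^bsub>M\<^esub>) \<otimes>\<^bsub>T\<^esub> (h i \<otimes>\<^bsub>T\<^esub> x)"
proof -
  let ?a = "fst (f p)"
  let ?P = "\<lambda>i s n' e'. s \<in> carrier R \<and> n' \<in> carrier R \<and> e' \<in> carrier M
       \<and> fst (f i) = s \<otimes> ?a \<oplus> n' \<and> ?a \<otimes> n' = \<zero> \<and> n' \<otimes> n' = \<zero>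
       \<and> ?a \<odot>\<^bsub>M\<^esub> snd (f i) = (?a \<otimes> ?a) \<odot>\<^bsub>M\<^esub> e'
       \<and> (i = p \<longrightarrow> s = \<one>) \<and> (n \<le> i \<and> i \<noteq> p \<longrightarrow> s = \<zero> \<and> e' = \<zero>\<^bsub>M\<^esub>)"
  have ex: "\<exists>y. ?P i (fst y) (fst (snd y)) (snd (snd y))" for i
  proof -
    obtain s n' e' where "s \<in> carrier R" "n' \<in> carrier R" "e' \<in> carrier M"
      "fst (f i) = s \<otimes> ?a \<oplus> n'" "?a \<otimes> n' = \<zero>" "n' \<otimes> n' = \<zero>"
      "?a \<odot>\<^bsub>M\<^esub> snd (f i) = (?a \<otimes> ?a) \<odot>\<^bsub>M\<^esub> e'"
      "i = p \<Longrightarrow> s = \<one>" "n \<le> i \<Longrightarrow> i \<noteq> p \<Longrightarrow> s = \<zero> \<and> e' = \<zero>\<^bsub>M\<^esub>"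
      using triv_ext_coeff_decomp[OF f dom, of i] by blast
    then show ?thesis by (intro exI[of _ "(s, n', e')"]) simp
  qed
  obtain y where "\<forall>i. ?P i (fst (y i)) (fst (snd (y i))) (snd (snd (y i)))"
    using choice[OF allI[OF ex]] ..
  then have y: "?P i (fst (y i)) (fst (snd (y i))) (snd (snd (y i)))" for i by (rule spec)
  define h where "h i = (fst (y i), snd (snd (y i)))" for i
  have hc: "\<And>i. h i \<in> carrier T" using y by (simp add: h_def triv_ext_carrier)
  show ?thesis
  proof
    show "finite_coeffs T h (Suc (n + p))"
      using hc y by (simp add: finite_coeffs_def triv_ext_zero h_def)
    let ?inv = "(\<one>, \<ominus>\<^bsub>M\<^esub> snd (snd (y p)))"
    have inv: "?inv \<in> carrier T" using y[of p] by (simp add: triv_ext_carrier)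
    have "?inv \<otimes>\<^bsub>T\<^esub> h p = \<one>\<^bsub>T\<^esub>"
      using y[of p] by (simp add: h_def triv_ext_simps smult_r_minus M.r_neg)
    then have "h p \<otimes>\<^bsub>T\<^esub> ?inv \<in> Units T" using T.m_comm[OF hc[of p] inv] by simp
    then show "h p \<in> Units T" using T.unit_factor hc[of p] inv by blast
  next
    fix i x assume x: "x \<in> carrier T" and ax: "dominates R ?a (fst x)"
    obtain b d where xbd: "x = (b, d)" by fastforce
    obtain \<alpha> \<epsilon> where fi: "f i = (\<alpha>, \<epsilon>)" by fastforce
    have "\<epsilon> \<in> carrier M" "?a \<in> carrier R"
      using f fi by (auto simp: finite_coeffs_def triv_ext_carrier mem_Times_iff dest: spec[of _ i] spec[of _ p])
    then show "f i \<otimes>\<^bsub>T\<^esub> x = (?a, \<zero>\<^bsub>M\<^esub>) \<otimes>\<^bsub>T\<^esub> (h i \<otimes>\<^bsub>T\<^esub> x)"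
      unfolding xbd fi h_def
      using triv_ext_mult_factor[of ?a "fst (y i)" "fst (snd (y i))" \<epsilon> "snd (snd (y i))" b d]
        y[of i] fi x ax xbd
      by (simp add: triv_ext_carrier)
  qed
qed

lemma prod_mem_content_if_dominating:
  assumes f: "finite_coeffs T f n" and g: "finite_coeffs T g m"
    and dom_f: "\<And>i. dominates R (fst (f p)) (fst (f i))"
    and dom_g: "\<And>j. dominates R (fst (f p)) (fst (g j))"
  shows "f i \<otimes>\<^bsub>T\<^esub> g j \<in> seq_content T (cauchy_prod T f g)"
proof -
  have fc: "\<And>i. f i \<in> carrier T" and gc: "\<And>j. g j \<in> carrier T"
    using f g by (auto simp: finite_coeffs_def)
  obtain h where h: "finite_coeffs T h (Suc (n + p))" "h p \<in> Units T"
    and factor: "\<And>i x. x \<in> carrier T \<Longrightarrow> dominates R (fst (f p)) (fst x) \<Longrightarrow>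
       f i \<otimes>\<^bsub>T\<^esub> x = (fst (f p), \<zero>\<^bsub>M\<^esub>) \<otimes>\<^bsub>T\<^esub> (h i \<otimes>\<^bsub>T\<^esub> x)"
    using triv_ext_factorization[OF f dom_f] by blast
  have a: "(fst (f p), \<zero>\<^bsub>M\<^esub>) \<in> carrier T"
    using fc[of p] by (auto simp: triv_ext_carrier mem_Times_iff)
  have "\<And>i j. f i \<otimes>\<^bsub>T\<^esub> g j = (fst (f p), \<zero>\<^bsub>M\<^esub>) \<otimes>\<^bsub>T\<^esub> (h i \<otimes>\<^bsub>T\<^esub> g j)"
    using factor[OF gc dom_g] .
  then show ?thesis by (rule T.factorization_prod_mem_content[OF fc h g a])
qed

lemma gaussian_seq_triv_ext: "gaussian_seq T"
proof (rule T.gaussian_seqI)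
  fix f g n m i j assume f: "finite_coeffs T f n" and g: "finite_coeffs T g m"
  interpret fst: ring_hom_cring T R fst by (rule fst_ring_hom)
  have fc: "\<And>i. f i \<in> carrier T" and gc: "\<And>j. g j \<in> carrier T"
    using f g by (auto simp: finite_coeffs_def)
  obtain p where p: "\<And>i. dominates R (fst (f p)) (fst (f i))"
    using exists_dominating_coeff[OF fst.finite_coeffs_hom[OF f]] by blast
  obtain q where q: "\<And>j. dominates R (fst (g q)) (fst (g j))"
    using exists_dominating_coeff[OF fst.finite_coeffs_hom[OF g]] by blast
  have fst_c: "\<And>x. x \<in> carrier T \<Longrightarrow> fst x \<in> carrier R" by (auto simp: triv_ext_carrier)
  from dominates_total[OF fst_c[OF fc] fst_c[OF gc], of p q]
  show "f i \<otimes>\<^bsub>T\<^esub> g j \<in> seq_content T (cauchy_prod T f g)"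
  proof
    assume "dominates R (fst (f p)) (fst (g q))"
    then have "dominates R (fst (f p)) (fst (g j))" for j
      using dominates_trans[OF fst_c[OF fc] fst_c[OF gc] fst_c[OF gc]] q by blast
    then show ?thesis by (rule prod_mem_content_if_dominating[OF f g p])
  next
    assume "dominates R (fst (g q)) (fst (f p))"
    then have "dominates R (fst (g q)) (fst (f i))" for i
      using dominates_trans[OF fst_c[OF gc] fst_c[OF fc] fst_c[OF fc]] p by blast
    then have "g j \<otimes>\<^bsub>T\<^esub> f i \<in> seq_content T (cauchy_prod T g f)"
      by (rule prod_mem_content_if_dominating[OF g f q])
    then show ?thesis using T.cauchy_prod_comm[OF fc gc] T.m_comm[OF fc gc] by simp
  qed
qed

end

theorem proposition2p1:
  fixes A :: "('a, 'c) ring_scheme" and E :: "('a, 'b) module"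
  assumes "local_ring A"
    and "module A E"
    and "carrier E \<noteq> {\<zero>\<^bsub>E\<^esub>}"
  shows "gaussian (triv_ext A E) \<longleftrightarrow>
           gaussian A \<and> (\<forall>a \<in> carrier A. smult_module E a = smult_module E (a \<otimes>\<^bsub>A\<^esub> a))"
proof -
  interpret trivial_extension A E by (rule trivial_extension.intro[OF assms(2)])
  have local: "local_cring A"
    using assms(1) unfolding local_ring_def by (intro local_cring.intro local_cring_axioms.intro) auto
  show ?thesis
  proof
    assume "gaussian (triv_ext A E)"
    then have G: "gaussian_seq (triv_ext A E)" by (simp add: T.gaussian_iff_gaussian_seq)
    have "gaussian A" using gaussian_seq_base[OF G] by (simp add: R.gaussian_iff_gaussian_seq)
    then show "gaussian A \<and> (\<forall>a \<in> carrier A. smult_module E a = smult_module E (a \<otimes>\<^bsub>A\<^esub> a))"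
      using smult_module_sq_if_gaussian[OF G] by blast
  next
    assume H: "gaussian A \<and> (\<forall>a \<in> carrier A. smult_module E a = smult_module E (a \<otimes>\<^bsub>A\<^esub> a))"
    interpret gaussian_trivial_extension A E
    proof (intro gaussian_trivial_extension.intro gaussian_local_ring.intro
        gaussian_trivial_extension_axioms.intro gaussian_local_ring_axioms.intro)
      show "gaussian_seq A" using H by (simp add: R.gaussian_iff_gaussian_seq)
      show "\<And>a. a \<in> carrier A \<Longrightarrow> smult_module E a = smult_module E (a \<otimes>\<^bsub>A\<^esub> a)"
        using H by blast
    qed (rule trivial_extension_axioms, rule local)
    show "gaussian (triv_ext A E)"
      using gaussian_seq_triv_ext by (simp add: T.gaussian_iff_gaussian_seq)
  qed
qed

end
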